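(* Let $C=\{x_0(x_1+x_2)+(x_1-x_2)^2=0\}\subset\mathbb{P}^2$. Then: $C$ is strongly concise; $(0:1:1)$ is the only point of $\{x_0=0\}$ with $\operatorname{Hrk}_C=1$; every point $(0:s:t)$ with $(s:t)\notin\{(1:1),(1:-1)\}$ has $\operatorname{Hrk}_C=2$; and the point $(0:1:-1)$ has $\operatorname{Hrk}_C((0:1:-1))=3$ while $\underline{\operatorname{Hrk}}_C((0:1:-1))=2$ (as $C^{\star2}=\mathbb{P}^2$).
   Context: Coordinates $x_0,x_1,x_2$ on $\mathbb{P}^2$, $H_i=\{x_i=0\}$. Hadamard product: $(p_0:p_1:p_2)\star(q_0:q_1:q_2)=(p_0q_0:p_1q_1:p_2q_2)$, defined when not all $p_iq_i$ vanish. $\operatorname{Hrk}_C(q)=\min\{m\mid q=p_1\star\cdots\star p_m,\ p_i\in C\}$. $C\star C$ is the Zariski closure of all defined products of two points of $C$, $C^{\star2}=C\star C$. Border rank $\underline{\operatorname{Hrk}}_C(p)=\min\{m\mid p\in C^{\star m}\}$ where $C^{\star1}=C$. $C$ is strongly concise if for every $i$, $(C\cap H_i)\not\subset\bigcup_{j\ne i}H_j$. *)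

theory Defs
  imports Complex_Main "HOL-Library.Extended_Nat"
begin

text \<open>Points of P^2 over the complex numbers are represented by nonzero
homogeneous coordinate vectors; subsets of P^2 by sets of nonzero vectors
closed under nonzero scaling (cones).\<close>

type_synonym v3 = "complex \<times> complex \<times> complex"

definition coord :: "v3 \<Rightarrow> nat \<Rightarrow> complex" where
  "coord v i = (case v of (a, b, c) \<Rightarrow> (if i = 0 then a else if i = 1 then b else c))"

definition smul :: "complex \<Rightarrow> v3 \<Rightarrow> v3" where
  "smul t v = (case v of (a, b, c) \<Rightarrow> (t * a, t * b, t * c))"

definition peq :: "v3 \<Rightarrow> v3 \<Rightarrow> bool" where
  "peq u v \<longleftrightarrow> u \<noteq> (0,0,0) \<and> v \<noteq> (0,0,0) \<and> (\<exists>t. t \<noteq> 0 \<and> u = smul t v)"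

text \<open>Coordinatewise (Hadamard) product of representatives; the projective
product is defined exactly when this is nonzero.\<close>
definition hmul :: "v3 \<Rightarrow> v3 \<Rightarrow> v3" where
  "hmul u v = (case u of (a, b, c) \<Rightarrow> case v of (a', b', c') \<Rightarrow> (a * a', b * b', c * c'))"

definition hprod_list :: "v3 list \<Rightarrow> v3" where
  "hprod_list ps = foldr hmul ps (1, 1, 1)"

definition hyp :: "nat \<Rightarrow> v3 set" where
  "hyp i = {v. v \<noteq> (0,0,0) \<and> coord v i = 0}"

text \<open>Homogeneous polynomials of degree d in x0,x1,x2: the coefficient function
c i j is the coefficient of x0^i x1^j x2^(d-i-j).\<close>
definition heval :: "nat \<Rightarrow> (nat \<Rightarrow> nat \<Rightarrow> complex) \<Rightarrow> v3 \<Rightarrow> complex" where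
  "heval d c v = (\<Sum>i\<le>d. \<Sum>j\<le>d - i. c i j * coord v 0 ^ i * coord v 1 ^ j * coord v 2 ^ (d - i - j))"

definition zclosure :: "v3 set \<Rightarrow> v3 set" where
  "zclosure S = {v. v \<noteq> (0,0,0) \<and> (\<forall>d c. (\<forall>s\<in>S. heval d c s = 0) \<longrightarrow> heval d c v = 0)}"

definition hstar :: "v3 set \<Rightarrow> v3 set \<Rightarrow> v3 set" where
  "hstar X Y = zclosure {hmul p q | p q. p \<in> X \<and> q \<in> Y \<and> hmul p q \<noteq> (0,0,0)}"

fun hpow :: "v3 set \<Rightarrow> nat \<Rightarrow> v3 set" where
  "hpow C 0 = UNIV"
| "hpow C (Suc 0) = C"
| "hpow C (Suc (Suc m)) = hstar (hpow C (Suc m)) C"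

text \<open>Hadamard rank (infinity if no decomposition exists).\<close>
definition Hrk :: "v3 set \<Rightarrow> v3 \<Rightarrow> enat" where
  "Hrk C q = (INF m \<in> {m. m \<ge> 1 \<and> (\<exists>ps. length ps = m \<and> set ps \<subseteq> C \<and> peq q (hprod_list ps))}. enat m)"

definition bHrk :: "v3 set \<Rightarrow> v3 \<Rightarrow> enat" where
  "bHrk C q = (INF m \<in> {m. m \<ge> 1 \<and> q \<in> hpow C m}. enat m)"

definition strongly_concise :: "v3 set \<Rightarrow> bool" where
  "strongly_concise C \<longleftrightarrow> (\<forall>i\<le>2. \<not> (C \<inter> hyp i \<subseteq> (\<Union>j\<in>{0,1,2} - {i}. hyp j)))"

definition projP2 :: "v3 set" where
  "projP2 = {v. v \<noteq> (0,0,0)}"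

definition curveC :: "v3 set" where
  "curveC = {(a, b, c). (a, b, c) \<noteq> (0,0,0) \<and> a * (b + c) + (b - c)^2 = 0}"

end

theory Submission
  imports Defs "HOL-Computational_Algebra.Fundamental_Theorem_Algebra"
begin

(* The only point of C on H_0 is (0:1:1), and (0:1:1) * (u:s:t) = (0:s:t); since every
   (s:t) with s + t \<noteq> 0 lies under a point of C, these points have rank 2.  For (0:1:-1)
   one factor of a two-term product would lie on H_0, forcing the other factor onto the
   line x_1 + x_2 = 0, which meets C only in (1:0:0); a product of three points does work.
   Finally, a point (x:y:z) with x y z (y + z) \<noteq> 0 is (a:m:1) * (x/a : y/m : z) with both
   factors on C as soon as m solves a quartic equation, so C * C contains a dense open
   subset of P^2 and its closure is all of P^2. *)

lemma peq_refl: "v \<noteq> (0,0,0) \<Longrightarrow> peq v v"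
  by (cases v) (auto simp: peq_def smul_def intro!: exI[of _ 1])

lemma hmul_commute: "hmul p q = hmul q p"
  by (cases p; cases q) (simp add: hmul_def mult.commute)

lemma hprod_list_Nil: "hprod_list [] = (1,1,1)"
  by (simp add: hprod_list_def)

lemma hprod_list_Cons: "hprod_list (p # ps) = hmul p (hprod_list ps)"
  by (simp add: hprod_list_def)

lemma hmul_one_right: "hmul p (1,1,1) = p"
  by (cases p) (simp add: hmul_def)

lemmas hprod_list_simps = hprod_list_Nil hprod_list_Cons hmul_one_right

definition is_hprod_of :: "v3 set \<Rightarrow> nat \<Rightarrow> v3 \<Rightarrow> bool" where
  "is_hprod_of C m q \<longleftrightarrow> (\<exists>ps. length ps = m \<and> set ps \<subseteq> C \<and> peq q (hprod_list ps))"

lemma is_hprod_of_1_iff: "is_hprod_of C 1 q \<longleftrightarrow> (\<exists>p\<in>C. peq q p)"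
proof
  assume "is_hprod_of C 1 q"
  then show "\<exists>p\<in>C. peq q p"
    by (auto simp: is_hprod_of_def length_Suc_conv hprod_list_simps)
next
  assume "\<exists>p\<in>C. peq q p"
  then obtain p where "p \<in> C" "peq q p" ..
  then show "is_hprod_of C 1 q"
    unfolding is_hprod_of_def by (intro exI[of _ "[p]"]) (simp add: hprod_list_simps)
qed

lemma is_hprod_of_2_iff: "is_hprod_of C 2 q \<longleftrightarrow> (\<exists>p\<in>C. \<exists>p'\<in>C. peq q (hmul p p'))"
proof
  assume "is_hprod_of C 2 q"
  then obtain p p' where "p \<in> C" "p' \<in> C" "peq q (hprod_list [p, p'])"
    by (auto simp: is_hprod_of_def length_Suc_conv numeral_2_eq_2)
  then show "\<exists>p\<in>C. \<exists>p'\<in>C. peq q (hmul p p')"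
    by (auto simp: hprod_list_simps)
next
  assume "\<exists>p\<in>C. \<exists>p'\<in>C. peq q (hmul p p')"
  then obtain p p' where "p \<in> C" "p' \<in> C" "peq q (hmul p p')" by blast
  then show "is_hprod_of C 2 q"
    unfolding is_hprod_of_def by (intro exI[of _ "[p, p']"]) (simp add: hprod_list_simps)
qed

lemma Hrk_eqI:
  assumes "n \<ge> 1" "is_hprod_of C n q" "\<And>m. 1 \<le> m \<Longrightarrow> m < n \<Longrightarrow> \<not> is_hprod_of C m q"
  shows "Hrk C q = n"
  unfolding Hrk_def using assms
  by (intro antisym INF_lower2[of n] INF_greatest)
     (auto simp: is_hprod_of_def simp flip: not_le)

lemma Hrk_eq_1_iff: "Hrk C q = 1 \<longleftrightarrow> (\<exists>p\<in>C. peq q p)"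
proof
  assume "Hrk C q = 1"
  show "\<exists>p\<in>C. peq q p"
  proof (rule ccontr)
    assume "\<not> (\<exists>p\<in>C. peq q p)"
    then have "\<not> is_hprod_of C 1 q"
      using is_hprod_of_1_iff by blast
    then have "enat 2 \<le> Hrk C q"
      unfolding Hrk_def is_hprod_of_def by (intro INF_greatest) (auto simp: le_Suc_eq)
    with \<open>Hrk C q = 1\<close> show False
      by (simp add: one_enat_def)
  qed
next
  assume "\<exists>p\<in>C. peq q p"
  then have "is_hprod_of C 1 q"
    using is_hprod_of_1_iff by blast
  then have "Hrk C q = enat 1"
    by (intro Hrk_eqI) auto
  then show "Hrk C q = 1"
    by (simp add: one_enat_def)
qed

lemma bHrk_eq_2I:
  assumes "q \<notin> C" "q \<in> hstar C C"
  shows "bHrk C q = 2"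
proof -
  have "2 \<le> m" if "m \<ge> 1" "q \<in> hpow C m" for m
    using that assms(1) by (cases "m = 1") auto
  then have "bHrk C q = enat 2"
    unfolding bHrk_def using assms(2)
    by (intro antisym INF_lower2[of 2] INF_greatest) (auto simp: numeral_2_eq_2)
  then show ?thesis
    by (simp add: numeral_eq_enat)
qed

lemma curveC_0_1_1: "(0, 1, 1) \<in> curveC"
  by (simp add: curveC_def)

lemma curveC_hyp0: "(0, b, c) \<in> curveC \<Longrightarrow> c = b \<and> b \<noteq> 0"
  by (auto simp: curveC_def)

lemma curveC_antidiagonal: "(a, b, -b) \<in> curveC \<Longrightarrow> b = 0"
  by (simp add: curveC_def algebra_simps power2_eq_square)

lemma curveC_point_above:
  assumes "s + t \<noteq> 0"
  shows "(- ((s - t)^2) / (s + t), s, t) \<in> curveC"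
  using assms by (auto simp: curveC_def field_simps)

lemma peq_curveC_hyp0:
  assumes "peq v p" "p \<in> curveC" "coord v 0 = 0"
  shows "peq v (0, 1, 1)"
proof -
  obtain a b c where p: "p = (a, b, c)"
    by (cases p)
  obtain t where t: "t \<noteq> 0" "v = smul t p"
    using assms(1) by (auto simp: peq_def)
  then have "a = 0"
    using assms(3) by (simp add: p smul_def coord_def)
  then have "c = b" "b \<noteq> 0"
    using curveC_hyp0 assms(2) by (auto simp: p)
  then have "v = smul (t * b) (0, 1, 1)" "t * b \<noteq> 0"
    using t \<open>a = 0\<close> by (simp_all add: p smul_def)
  then show ?thesis
    unfolding peq_def by (auto simp: smul_def)
qed

lemma curveC_smul:
  assumes "t \<noteq> 0" "p \<in> curveC"
  shows "smul t p \<in> curveC"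
proof -
  obtain a b c where p: "p = (a, b, c)"
    by (cases p)
  have "(t * a) * (t * b + t * c) + (t * b - t * c)^2 = t^2 * (a * (b + c) + (b - c)^2)"
    by (simp add: algebra_simps power2_eq_square)
  with assms show ?thesis
    by (auto simp: p curveC_def smul_def)
qed

lemma smul_hmul: "smul t (hmul p q) = hmul (smul t p) q"
  by (cases p; cases q) (simp add: smul_def hmul_def)

lemma hmul_curveC_ne_0_1_m1:
  assumes "p \<in> curveC" "q \<in> curveC"
  shows "hmul p q \<noteq> (0, 1, -1)"
proof
  assume pq: "hmul p q = (0, 1, -1)"
  have False if "p \<in> curveC" "q \<in> curveC" "hmul p q = (0, 1, -1)" "fst p = 0" for p q
  proof -
    obtain b c a' b' c' where pq_eq: "p = (0, b, c)" "q = (a', b', c')"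
      using \<open>fst p = 0\<close> by (cases p; cases q) auto
    then have "c = b"
      using curveC_hyp0 \<open>p \<in> curveC\<close> by blast
    then have "b * b' = 1" "b * c' = -1"
      using \<open>hmul p q = (0, 1, -1)\<close> by (simp_all add: pq_eq hmul_def)
    then have "c' = - b'"
      by (metis minus_mult_right mult_cancel_left mult_zero_left zero_neq_one)
    then have "b' = 0"
      using curveC_antidiagonal \<open>q \<in> curveC\<close> pq_eq by blast
    with \<open>b * b' = 1\<close> show False
      by simp
  qed
  moreover have "fst p = 0 \<or> fst q = 0"
    using pq by (cases p; cases q) (simp add: hmul_def)
  ultimately show False
    using assms pq hmul_commute by metis
qed

lemma not_peq_hmul_curveC_0_1_m1:
  assumes "p \<in> curveC" "q \<in> curveC"
  shows "\<not> peq (0, 1, -1) (hmul p q)"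
proof
  assume "peq (0, 1, -1) (hmul p q)"
  then obtain t where "t \<noteq> 0" "hmul (smul t p) q = (0, 1, -1)"
    by (auto simp: peq_def smul_hmul)
  then show False
    using hmul_curveC_ne_0_1_m1 curveC_smul assms by blast
qed

lemma strongly_concise_curveC: "strongly_concise curveC"
proof -
  have w0: "(0, 1, 1) \<in> curveC \<inter> hyp 0 - (hyp 1 \<union> hyp 2)"
   and w1: "(1, 0, -1) \<in> curveC \<inter> hyp 1 - (hyp 0 \<union> hyp 2)"
   and w2: "(1, -1, 0) \<in> curveC \<inter> hyp 2 - (hyp 0 \<union> hyp 1)"
    by (simp_all add: curveC_def hyp_def coord_def)
  have "i \<le> 2 \<Longrightarrow> i = 0 \<or> i = 1 \<or> i = (2::nat)" for i by auto
  then show ?thesis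
    unfolding strongly_concise_def using w0 w1 w2 by (auto simp: insert_Diff_if)
qed

lemma Hrk_curveC_hyp0_eq_1_iff:
  assumes "v \<in> hyp 0"
  shows "Hrk curveC v = 1 \<longleftrightarrow> peq v (0, 1, 1)"
proof -
  have "coord v 0 = 0"
    using assms by (simp add: hyp_def)
  then show ?thesis
    unfolding Hrk_eq_1_iff using peq_curveC_hyp0 curveC_0_1_1 by blast
qed

lemma not_is_hprod_of_1_curveC_hyp0:
  assumes "\<not> peq (0, s, t) (0, 1, 1)"
  shows "\<not> is_hprod_of curveC 1 (0, s, t)"
  unfolding is_hprod_of_1_iff using assms peq_curveC_hyp0[of "(0, s, t)"] by (auto simp: coord_def)

lemma Hrk_curveC_hyp0_eq_2:
  assumes "(s, t) \<noteq> (0, 0)" "\<not> peq (0, s, t) (0, 1, 1)" "\<not> peq (0, s, t) (0, 1, -1)"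
  shows "Hrk curveC (0, s, t) = 2"
proof -
  have "s + t \<noteq> 0"
  proof
    assume "s + t = 0"
    then have "(0, s, t) = smul s (0, 1, -1)" "s \<noteq> 0"
      using assms(1) by (auto simp: smul_def add_eq_0_iff)
    then have "peq (0, s, t) (0, 1, -1)"
      unfolding peq_def using assms(1) by auto
    with assms(3) show False ..
  qed
  define u where "u = - ((s - t)^2) / (s + t)"
  have "(u, s, t) \<in> curveC"
    unfolding u_def using \<open>s + t \<noteq> 0\<close> by (rule curveC_point_above)
  moreover have "hmul (0, 1, 1) (u, s, t) = (0, s, t)"
    by (simp add: hmul_def)
  moreover have "peq (0, s, t) (0, s, t)"
    using assms(1) by (simp add: peq_refl)
  ultimately have "is_hprod_of curveC 2 (0, s, t)"
    unfolding is_hprod_of_2_iff using curveC_0_1_1 by metis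
  then have "Hrk curveC (0, s, t) = enat 2"
    using not_is_hprod_of_1_curveC_hyp0[OF assms(2)] by (intro Hrk_eqI) (auto simp: less_2_cases_iff)
  then show ?thesis
    by (simp add: numeral_eq_enat)
qed

lemma Hrk_curveC_0_1_m1: "Hrk curveC (0, 1, -1) = 3"
proof -
  let ?r = "(1 + \<i>, 1, \<i>) :: v3"
  have "?r \<in> curveC"
    by (simp add: curveC_def power2_eq_square algebra_simps)
  moreover have "hprod_list [(0, 1, 1), ?r, ?r] = (0, 1, -1)"
    by (simp add: hprod_list_simps hmul_def)
  ultimately have "is_hprod_of curveC 3 (0, 1, -1)"
    unfolding is_hprod_of_def by (intro exI[of _ "[(0, 1, 1), ?r, ?r]"]) (simp add: peq_refl curveC_0_1_1)
  moreover have "\<not> is_hprod_of curveC 1 (0, 1, -1)"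
    by (rule not_is_hprod_of_1_curveC_hyp0) (simp add: peq_def smul_def)
  moreover have "\<not> is_hprod_of curveC 2 (0, 1, -1)"
    using not_peq_hmul_curveC_0_1_m1 by (auto simp: is_hprod_of_2_iff)
  ultimately have "Hrk curveC (0, 1, -1) = enat 3"
    by (intro Hrk_eqI) (auto simp: numeral_3_eq_3 numeral_2_eq_2 less_Suc_eq)
  then show ?thesis
    by (simp add: numeral_eq_enat)
qed

lemma quartic_has_root:
  fixes x y z :: complex
  assumes "z \<noteq> 0"
  shows "\<exists>m. (m - 1)^2 * (y - z * m)^2 - x * m * (y + z * m) * (m + 1) = 0"
proof -
  define P where "P = [: y^2, -2*y^2 - 2*y*z - x*y, y^2 + 4*y*z + z^2 - x*(y + z),
                        -2*y*z - 2*z^2 - x*z, z^2 :]"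
  have eval_P: "poly P m = (m - 1)^2 * (y - z * m)^2 - x * m * (y + z * m) * (m + 1)" for m
    unfolding P_def by (simp add: algebra_simps power2_eq_square)
  have "degree P = 4"
    using assms unfolding P_def by simp
  then have "\<not> constant (poly P)"
    by (simp add: constant_degree)
  then obtain m where "poly P m = 0"
    using fundamental_theorem_of_algebra by blast
  then show ?thesis
    using eval_P by auto
qed

(* The quartic is what remains of the equations of C for (a:m:1) and (x/a : y/m : z)
   after eliminating a. *)
lemma hmul_curveC_surj_off_lines:
  fixes x y z :: complex
  assumes "x \<noteq> 0" "y \<noteq> 0" "z \<noteq> 0" "y + z \<noteq> 0"
  shows "\<exists>p\<in>curveC. \<exists>q\<in>curveC. hmul p q = (x, y, z)"
proof -
  obtain m where quartic: "(m - 1)^2 * (y - z * m)^2 - x * m * (y + z * m) * (m + 1) = 0"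
    using quartic_has_root assms(3) by blast
  have "m \<noteq> 0"
    using quartic assms by auto
  have "y - z * m \<noteq> 0"
  proof
    assume "y - z * m = 0"
    then have "y = z * m" "x * m * (y + z * m) * (m + 1) = 0"
      using quartic by simp_all
    then have "z * (m + 1) = y + z" "x * m * (2 * y) * (m + 1) = 0"
      by (simp_all add: algebra_simps)
    with assms \<open>m \<noteq> 0\<close> show False
      by auto
  qed
  have "y + z * m \<noteq> 0"
  proof
    assume "y + z * m = 0"
    then have "z * m = - y" "(m - 1)^2 * (y - z * m)^2 = 0"
      using quartic by (simp_all add: eq_neg_iff_add_eq_0 add.commute)
    moreover from this(1) have "z * (m - 1) = - (y + z)"
      by (simp add: algebra_simps)
    ultimately show False
      using assms \<open>y - z * m \<noteq> 0\<close> by auto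
  qed
  define a where "a = - x * m * (y + z * m) / (y - z * m)^2"
  have "a \<noteq> 0"
    using assms \<open>m \<noteq> 0\<close> \<open>y - z * m \<noteq> 0\<close> \<open>y + z * m \<noteq> 0\<close> by (simp add: a_def)
  have "a * (m + 1) + (m - 1)^2 = ((m - 1)^2 * (y - z * m)^2 - x * m * (y + z * m) * (m + 1)) / (y - z * m)^2"
    using \<open>y - z * m \<noteq> 0\<close> by (simp add: a_def field_simps)
  then have p_on_C: "(a, m, 1) \<in> curveC"
    using quartic by (simp add: curveC_def)
  have "x / a * (y / m + z) + (y / m - z)^2 = (x * m * (y + z * m) + a * (y - z * m)^2) / (a * m^2)"
    using \<open>a \<noteq> 0\<close> \<open>m \<noteq> 0\<close> by (simp add: field_simps power2_eq_square)
  also have "x * m * (y + z * m) + a * (y - z * m)^2 = 0"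
    using \<open>y - z * m \<noteq> 0\<close> by (simp add: a_def)
  finally have q_on_C: "(x / a, y / m, z) \<in> curveC"
    using assms by (simp add: curveC_def)
  have "hmul (a, m, 1) (x / a, y / m, z) = (x, y, z)"
    using \<open>a \<noteq> 0\<close> \<open>m \<noteq> 0\<close> by (simp add: hmul_def)
  with p_on_C q_on_C show ?thesis
    by blast
qed

lemma eventually_at_0_affine_ne:
  fixes a k :: "'a :: real_normed_field"
  assumes "k \<noteq> 0"
  shows "eventually (\<lambda>e. a + k * e \<noteq> 0) (at 0)"
  using eventually_neq_at_within[of "- a / k" 0 UNIV]
proof eventually_elim
  case (elim e)
  show ?case
  proof
    assume "a + k * e = 0"
    then have "k * e = - a"
      by (simp add: eq_neg_iff_add_eq_0 add.commute)
    then have "e = - a / k"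
      using assms by (metis nonzero_mult_div_cancel_left)
    with elim show False ..
  qed
qed

(* Along the direction (1,1,2) each of x, y, z, y + z is a nonconstant affine function,
   so it is nonzero at all small nonzero perturbations. *)
lemma heval_eq_0_if_eq_0_off_lines:
  assumes "\<And>x y z. x \<noteq> 0 \<Longrightarrow> y \<noteq> 0 \<Longrightarrow> z \<noteq> 0 \<Longrightarrow> y + z \<noteq> 0 \<Longrightarrow> heval d c (x, y, z) = 0"
  shows "heval d c (x, y, z) = 0"
proof -
  define g where "g = (\<lambda>e::complex. heval d c (x + e, y + e, z + 2 * e))"
  have "isCont g 0"
    unfolding g_def heval_def coord_def by (simp; intro continuous_intros)
  then have "(g \<longlongrightarrow> g 0) (at 0)"
    by (simp add: isCont_def)
  moreover have "eventually (\<lambda>e. g e = 0) (at 0)"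
  proof -
    have "eventually (\<lambda>e. x + 1 * e \<noteq> 0 \<and> y + 1 * e \<noteq> 0 \<and> z + 2 * e \<noteq> 0 \<and> (y + z) + 3 * e \<noteq> 0) (at 0)"
      by (intro eventually_conj eventually_at_0_affine_ne) auto
    then show ?thesis
      by eventually_elim (auto simp: g_def algebra_simps intro!: assms)
  qed
  then have "(g \<longlongrightarrow> 0) (at 0)"
    by (simp add: tendsto_eventually)
  ultimately have "g 0 = 0"
    by (rule tendsto_unique[rotated]) simp
  then show ?thesis
    by (simp add: g_def)
qed

lemma zclosure_eq_projP2I:
  assumes "\<And>x y z. x \<noteq> 0 \<Longrightarrow> y \<noteq> 0 \<Longrightarrow> z \<noteq> 0 \<Longrightarrow> y + z \<noteq> 0 \<Longrightarrow> (x, y, z) \<in> S"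
  shows "zclosure S = projP2"
proof
  show "zclosure S \<subseteq> projP2"
    by (auto simp: zclosure_def projP2_def)
next
  have "heval d c v = 0" if "\<forall>s\<in>S. heval d c s = 0" for d c v
    using heval_eq_0_if_eq_0_off_lines[of d c] that assms by (cases v) blast
  then show "projP2 \<subseteq> zclosure S"
    by (auto simp: zclosure_def projP2_def)
qed

lemma hstar_curveC_curveC: "hstar curveC curveC = projP2"
  unfolding hstar_def
proof (rule zclosure_eq_projP2I)
  fix x y z :: complex
  assume "x \<noteq> 0" "y \<noteq> 0" "z \<noteq> 0" "y + z \<noteq> 0"
  then obtain p q where "p \<in> curveC" "q \<in> curveC" "hmul p q = (x, y, z)"
    using hmul_curveC_surj_off_lines by blast
  moreover from \<open>x \<noteq> 0\<close> \<open>hmul p q = (x, y, z)\<close> have "hmul p q \<noteq> (0, 0, 0)"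
    by simp
  ultimately show "(x, y, z) \<in> {hmul p q |p q. p \<in> curveC \<and> q \<in> curveC \<and> hmul p q \<noteq> (0, 0, 0)}"
    by (metis (mono_tags, lifting) mem_Collect_eq)
qed

theorem mainTheorem13:
  shows "strongly_concise curveC
    \<and> (\<forall>v\<in>hyp 0. Hrk curveC v = 1 \<longleftrightarrow> peq v (0, 1, 1))
    \<and> (\<forall>s t. (s, t) \<noteq> (0, 0) \<and> \<not> peq (0, s, t) (0, 1, 1) \<and> \<not> peq (0, s, t) (0, 1, -1)
          \<longrightarrow> Hrk curveC (0, s, t) = 2)
    \<and> Hrk curveC (0, 1, -1) = 3
    \<and> bHrk curveC (0, 1, -1) = 2
    \<and> hstar curveC curveC = projP2"
proof -
  have "(0, 1, -1) \<notin> curveC"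
    by (simp add: curveC_def)
  moreover have "(0, 1, -1) \<in> hstar curveC curveC"
    by (simp add: hstar_curveC_curveC projP2_def)
  ultimately have "bHrk curveC (0, 1, -1) = 2"
    by (rule bHrk_eq_2I)
  then show ?thesis
    using strongly_concise_curveC Hrk_curveC_hyp0_eq_1_iff Hrk_curveC_hyp0_eq_2
      Hrk_curveC_0_1_m1 hstar_curveC_curveC
    by blast
qed

end
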